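(* Let $X_1,X_2$ be Polish spaces, $\mu_1\in\mathcal P(X_1)$, $\mu_2\in\mathcal P^n(X_2)$ for some $n\in\mathbb N$, and $\pi\in\Pi(\mu_1,\mu_2)$. Then for $1<q\le 2$, $$D_q(\pi,\mu_1\otimes\mu_2)\le\phi_q(n)=\frac{n^{q-1}-1}{q-1}.$$
   Context: $\mathcal P^n(X)$ denotes the set of probability measures on $X$ supported on at most $n$ points; $\Pi(\mu_1,\mu_2)$ the set of couplings. The Tsallis relative entropy is $D_q(\mu,\nu)=\frac{1}{q-1}\int\big[(\frac{d\mu}{d\nu})^q-\frac{d\mu}{d\nu}\big]\,d\nu$ if $\mu\ll\nu$ and $q>1$, $+\infty$ otherwise; $\phi_q(x)=\frac{x^{q-1}-1}{q-1}$ for $q>1$. *)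

theory Defs
  imports "HOL-Probability.Probability"
begin

definition phi_q :: "real \<Rightarrow> real \<Rightarrow> real" where
  "phi_q q x = (x powr (q - 1) - 1) / (q - 1)"

text \<open>Tsallis relative entropy D_q(mu, nu) for q > 1, valued in the extended reals.
  If mu << nu (on the same sigma-algebra) with density f = d mu / d nu, it is
  (1/(q-1)) * integral of (f^q - f) d nu; the integrand is bounded below by -1, so for a
  finite nu a non-integrable integrand has integral +infinity.\<close>
definition tsallis_div :: "real \<Rightarrow> 'a measure \<Rightarrow> 'a measure \<Rightarrow> ereal" where
  "tsallis_div q \<mu> \<nu> =
     (if q > 1 \<and> sets \<mu> = sets \<nu> \<and> absolutely_continuous \<nu> \<mu> then
        (let f = (\<lambda>x. enn2real (RN_deriv \<nu> \<mu> x)) in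
          if integrable \<nu> (\<lambda>x. f x powr q - f x)
          then ereal ((\<integral>x. (f x powr q - f x) \<partial>\<nu>) / (q - 1))
          else \<infinity>)
      else \<infinity>)"

definition supported_on_at_most :: "nat \<Rightarrow> 'a measure \<Rightarrow> bool" where
  "supported_on_at_most n \<mu> \<longleftrightarrow>
     (\<exists>S. finite S \<and> card S \<le> n \<and> S \<in> sets \<mu> \<and> emeasure \<mu> (space \<mu> - S) = 0)"

definition coupling :: "('a \<times> 'b) measure \<Rightarrow> 'a measure \<Rightarrow> 'b measure \<Rightarrow> bool" where
  "coupling \<pi> \<mu>1 \<mu>2 \<longleftrightarrow>
     prob_space \<pi> \<and> sets \<pi> = sets (\<mu>1 \<Otimes>\<^sub>M \<mu>2) \<and>
     distr \<pi> \<mu>1 fst = \<mu>1 \<and> distr \<pi> \<mu>2 snd = \<mu>2"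

end

theory Submission
  imports Defs
begin

(* Let nu = mu1 x mu2 and let A be the finite set of atoms of mu2.  Every measurable E splits
  into its slices E_s = {x. (x, s) \<in> E}, s \<in> A, up to a pi-null set, and the first marginal
  of pi is mu1, so pi(E) \<le> sum of mu1(E_s) over s \<in> A, which is the integral over E of
  1/mu2{y} with respect to nu.  Hence pi << nu with a density f(x, y) \<le> 1/mu2{y}, and then
  integral f^q dnu \<le> integral f(x, y) mu2{y}^(1-q) dnu = integral mu2{y}^(1-q) dmu2
  = sum of mu2{s}^(2-q) over s \<in> A, using that the second marginal of pi is mu2.  By
  concavity of t^(2-q) this sum is at most |A|^(q-1) \<le> n^(q-1); since integral f dnu = 1,
  the bound on D_q follows. *)

lemma sum_powr_le_card_powr:
  fixes p :: "'a \<Rightarrow> real"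
  assumes "finite T" and p_nonneg: "\<And>s. s \<in> T \<Longrightarrow> 0 \<le> p s" and "sum p T = 1"
    and "0 \<le> a" "a \<le> 1"
  shows "(\<Sum>s\<in>T. p s powr a) \<le> real (card T) powr (1 - a)"
proof -
  define m where "m = real (card T)"
  have "m > 0"
    using assms(1,3) by (auto simp: m_def card_gt_0_iff)
  have young: "(m * p s) powr a \<le> a * (m * p s) + (1 - a)" if "s \<in> T" for s
  proof (cases "p s = 0")
    case False
    then show ?thesis
      using Youngs_inequality_0[of a "1 - a" "m * p s" 1] \<open>m > 0\<close> p_nonneg[OF that] assms(4,5)
      by simp
  qed (use assms(5) in simp)
  have "m powr a * (\<Sum>s\<in>T. p s powr a) = (\<Sum>s\<in>T. (m * p s) powr a)"
    using \<open>m > 0\<close> p_nonneg by (simp add: powr_mult sum_distrib_left)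
  also have "\<dots> \<le> (\<Sum>s\<in>T. a * (m * p s) + (1 - a))"
    by (intro sum_mono young)
  also have "\<dots> = a * m * sum p T + m * (1 - a)"
    by (simp add: sum.distrib sum_distrib_left m_def mult.assoc)
  also have "\<dots> = m"
    using assms(3) by (simp add: algebra_simps)
  also have "\<dots> = m powr a * m powr (1 - a)"
    using \<open>m > 0\<close> by (simp add: powr_add[symmetric])
  finally show ?thesis
    using \<open>m > 0\<close> by (simp add: m_def)
qed

lemma sum_mult_indicator_singleton:
  fixes f :: "'a \<Rightarrow> 'b::semiring_1"
  assumes "finite A"
  shows "(\<Sum>s\<in>A. f s * indicator {s} y) = (if y \<in> A then f y else 0)"
  using assms by (simp add: indicator_def of_bool_def if_distrib sum.delta' cong: if_cong)

lemma measure_singleton_eq_0_if_AE_notin: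
  assumes "AE y in M. y \<in> A" "{y} \<in> sets M" "y \<notin> A"
  shows "measure M {y} = 0"
proof -
  have "AE x in M. x \<notin> {y}"
    using assms(1) by eventually_elim (use assms(3) in auto)
  then show ?thesis
    using AE_iff_null_sets[OF assms(2)] by (simp add: measure_def null_sets_def)
qed

lemma AE_in_positive_atoms:
  assumes "finite_measure M" "finite S" "AE y in M. y \<in> S" "\<And>y. {y} \<in> sets M"
  shows "AE y in M. y \<in> {s \<in> S. 0 < measure M {s}}"
proof -
  let ?N = "{s \<in> S. measure M {s} = 0}"
  have "finite ?N"
    using assms(2) by simp
  then have N_sets: "?N \<in> sets M"
    by (intro sets.countable[OF assms(4)] countable_finite)
  have "emeasure M ?N = (\<Sum>s\<in>?N. emeasure M {s})"
    using \<open>finite ?N\<close> assms(4) by (intro emeasure_eq_sum_singleton) simp_all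
  also have "\<dots> = 0"
    using assms(1) by (simp add: finite_measure.emeasure_eq_measure)
  finally have "AE y in M. y \<notin> ?N"
    using N_sets by (intro AE_not_in) (simp add: null_sets_def)
  with assms(3) show ?thesis
    by eventually_elim (simp add: zero_less_measure_iff)
qed

lemma (in prob_space) obtain_atoms_if_supported_on_at_most:
  assumes "supported_on_at_most n M" "\<And>y. {y} \<in> events"
  obtains A where "finite A" "card A \<le> n" "AE y in M. y \<in> A" "\<And>s. s \<in> A \<Longrightarrow> 0 < prob {s}"
proof -
  obtain S where S: "finite S" "card S \<le> n" "S \<in> events" "emeasure M (space M - S) = 0"
    using assms(1) unfolding supported_on_at_most_def by blast
  then have "AE y in M. y \<in> S"
    by (subst AE_iff_measurable[of "space M - S"]) auto
  then have "AE y in M. y \<in> {s \<in> S. 0 < prob {s}}"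
    using AE_in_positive_atoms[OF finite_measure_axioms S(1) _ assms(2)] by blast
  moreover have "card {s \<in> S. 0 < prob {s}} \<le> n"
    using card_mono[OF S(1), of "{s \<in> S. 0 < prob {s}}"] S(2) by auto
  ultimately show ?thesis
    using S(1) by (intro that[of "{s \<in> S. 0 < prob {s}}"]) simp_all
qed

lemma (in prob_space) sum_prob_singleton_eq_1:
  assumes "finite A" "AE y in M. y \<in> A" "\<And>y. {y} \<in> events"
  shows "(\<Sum>s\<in>A. prob {s}) = 1"
proof -
  have "A \<in> events"
    by (intro sets.countable[OF assms(3)] countable_finite assms(1))
  then show ?thesis
    using AE_in_set_eq_1 assms measure_eq_sum_singleton[OF assms(1)] by auto
qed

lemma integral_eq_sum_atoms:
  fixes f :: "'a \<Rightarrow> real"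
  assumes "finite_measure M" "finite A" "AE y in M. y \<in> A" "\<And>y. {y} \<in> sets M"
    and "f \<in> borel_measurable M"
  shows "(\<integral>y. f y \<partial>M) = (\<Sum>s\<in>A. measure M {s} * f s)"
proof -
  have "(\<lambda>y. \<Sum>s\<in>A. f s * indicator {s} y) \<in> borel_measurable M"
    using assms(4) by measurable
  moreover have "AE y in M. f y = (\<Sum>s\<in>A. f s * indicator {s} y)"
    using assms(3) by eventually_elim (simp add: sum_mult_indicator_singleton[OF assms(2)])
  ultimately have "(\<integral>y. f y \<partial>M) = (\<integral>y. (\<Sum>s\<in>A. f s * indicator {s} y) \<partial>M)"
    using assms(5) by (intro integral_cong_AE)
  also have "\<dots> = (\<Sum>s\<in>A. measure M {s} * f s)"
    using assms(1,4)
    by (subst Bochner_Integration.integral_sum) (auto simp: finite_measure.emeasure_eq_measure mult.commute)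
  finally show ?thesis .
qed

(* As 1 / 0 = 0, this vanishes on non-atoms, i.e. it is the density of the counting measure
  on the atoms of M. *)
definition inverse_atom_mass :: "'a measure \<Rightarrow> 'a \<Rightarrow> real" where
  "inverse_atom_mass M y = 1 / measure M {y}"

lemma inverse_atom_mass_nonneg [simp]: "0 \<le> inverse_atom_mass M y"
  by (simp add: inverse_atom_mass_def)

lemma inverse_atom_mass_eq_sum:
  assumes "finite A" "AE y in M. y \<in> A" "{y} \<in> sets M"
  shows "inverse_atom_mass M y = (\<Sum>s\<in>A. inverse_atom_mass M s * indicator {s} y)"
  unfolding sum_mult_indicator_singleton[OF assms(1)]
  using measure_singleton_eq_0_if_AE_notin[OF assms(2,3)] by (simp add: inverse_atom_mass_def)

lemma borel_measurable_inverse_atom_mass: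
  assumes "finite A" "AE y in M. y \<in> A" "\<And>y. {y} \<in> sets M"
  shows "inverse_atom_mass M \<in> borel_measurable M"
proof -
  have "inverse_atom_mass M = (\<lambda>y. \<Sum>s\<in>A. inverse_atom_mass M s * indicator {s} y)"
    using inverse_atom_mass_eq_sum[OF assms(1,2,3)] by blast
  also have "\<dots> \<in> borel_measurable M"
    using assms(3) by measurable
  finally show ?thesis .
qed

lemma inverse_atom_mass_le_sum:
  assumes "finite A" "AE y in M. y \<in> A" "{y} \<in> sets M"
  shows "inverse_atom_mass M y \<le> (\<Sum>s\<in>A. inverse_atom_mass M s)"
  unfolding inverse_atom_mass_eq_sum[OF assms]
  by (intro sum_mono) (simp add: indicator_def)

lemma integral_inverse_atom_mass_powr:
  assumes "finite_measure M" "finite A" "AE y in M. y \<in> A" "\<And>y. {y} \<in> sets M"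
  shows "(\<integral>y. inverse_atom_mass M y powr r \<partial>M) = (\<Sum>s\<in>A. measure M {s} powr (1 - r))"
proof -
  have "measure M {s} * inverse_atom_mass M s powr r = measure M {s} powr (1 - r)" for s
    by (cases "measure M {s} = 0")
       (simp_all add: inverse_atom_mass_def powr_divide powr_diff less_le)
  then show ?thesis
    using assms borel_measurable_inverse_atom_mass[OF assms(2-4)]
    by (subst integral_eq_sum_atoms) auto
qed

lemma nn_integral_inverse_atom_mass_indicator:
  assumes "finite_measure M2" "finite A" "AE y in M2. y \<in> A" "\<And>y. {y} \<in> sets M2"
    and pos: "\<And>s. s \<in> A \<Longrightarrow> 0 < measure M2 {s}"
    and E: "E \<in> sets (M1 \<Otimes>\<^sub>M M2)"
  shows "(\<integral>\<^sup>+z. ennreal (inverse_atom_mass M2 (snd z)) * indicator E z \<partial>(M1 \<Otimes>\<^sub>M M2))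
    = (\<Sum>s\<in>A. emeasure M1 ((\<lambda>x. (x, s)) -` E))"
proof -
  interpret M2: finite_measure M2 by fact
  let ?E_at = "\<lambda>s. (\<lambda>x. (x, s)) -` E"
  have E_at_sets: "?E_at s \<in> sets M1" for s
    using E by (rule sets_Pair2)
  have "ennreal (inverse_atom_mass M2 (snd z)) * indicator E z
      = (\<Sum>s\<in>A. ennreal (inverse_atom_mass M2 s) * indicator (?E_at s \<times> {s}) z)" for z
  proof -
    obtain x y where z: "z = (x, y)" by fastforce
    have "indicator (?E_at s \<times> {s}) z = (indicator {s} y * indicator E z :: ennreal)" for s
      by (auto simp: indicator_def z)
    then have "(\<Sum>s\<in>A. ennreal (inverse_atom_mass M2 s) * indicator (?E_at s \<times> {s}) z)
        = (\<Sum>s\<in>A. ennreal (inverse_atom_mass M2 s) * indicator {s} y) * indicator E z"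
      by (simp add: sum_distrib_right mult.assoc)
    also have "\<dots> = (if y \<in> A then ennreal (inverse_atom_mass M2 y) else 0) * indicator E z"
      by (simp only: sum_mult_indicator_singleton[OF assms(2)])
    also have "\<dots> = ennreal (inverse_atom_mass M2 (snd z)) * indicator E z"
      using measure_singleton_eq_0_if_AE_notin[OF assms(3,4)]
      by (simp add: z inverse_atom_mass_def)
    finally show ?thesis ..
  qed
  then have "(\<integral>\<^sup>+z. ennreal (inverse_atom_mass M2 (snd z)) * indicator E z \<partial>(M1 \<Otimes>\<^sub>M M2))
      = (\<Sum>s\<in>A. inverse_atom_mass M2 s * emeasure (M1 \<Otimes>\<^sub>M M2) (?E_at s \<times> {s}))"
    using E_at_sets assms(4) by (simp add: nn_integral_sum nn_integral_cmult_indicator del: ennreal_mult')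
  also have "\<dots> = (\<Sum>s\<in>A. emeasure M1 (?E_at s))"
  proof (rule sum.cong[OF refl])
    fix s assume "s \<in> A"
    have "inverse_atom_mass M2 s * emeasure (M1 \<Otimes>\<^sub>M M2) (?E_at s \<times> {s})
        = emeasure M1 (?E_at s) * (ennreal (inverse_atom_mass M2 s) * ennreal (measure M2 {s}))"
      using E_at_sets assms(4)
      by (simp add: M2.emeasure_pair_measure_Times M2.emeasure_eq_measure ac_simps)
    also have "ennreal (inverse_atom_mass M2 s) * ennreal (measure M2 {s}) = 1"
      using pos[OF \<open>s \<in> A\<close>] by (simp add: inverse_atom_mass_def ennreal_mult[symmetric])
    finally show "inverse_atom_mass M2 s * emeasure (M1 \<Otimes>\<^sub>M M2) (?E_at s \<times> {s})
        = emeasure M1 (?E_at s)"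
      by simp
  qed
  finally show ?thesis .
qed

lemma absolutely_continuous_if_le_density:
  assumes "sets N = sets M"
    and "\<And>E. E \<in> sets M \<Longrightarrow> emeasure N E \<le> (\<integral>\<^sup>+z. g z * indicator E z \<partial>M)"
  shows "absolutely_continuous M N"
  unfolding absolutely_continuous_def
proof
  fix E assume "E \<in> null_sets M"
  then show "E \<in> null_sets N"
    using assms(2)[of E] nn_integral_null_set[of E M g] assms(1) by (auto simp: null_sets_def)
qed

lemma AE_RN_deriv_le_if_le_density:
  fixes g :: "'a \<Rightarrow> ennreal"
  assumes "sigma_finite_measure M" "sets N = sets M"
    and [measurable]: "g \<in> borel_measurable M" and "(\<integral>\<^sup>+z. g z \<partial>M) \<noteq> \<infinity>"
    and le: "\<And>E. E \<in> sets M \<Longrightarrow> emeasure N E \<le> (\<integral>\<^sup>+z. g z * indicator E z \<partial>M)"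
  shows "AE z in M. RN_deriv M N z \<le> g z"
proof -
  let ?f = "RN_deriv M N"
  let ?B = "{z \<in> space M. g z < ?f z}"
  have "density M ?f = N"
    using sigma_finite_measure.density_RN_deriv[OF assms(1) absolutely_continuous_if_le_density]
      assms(2) le by blast
  have [measurable]: "?B \<in> sets M"
    by measurable
  have "(\<integral>\<^sup>+z. g z * indicator ?B z \<partial>M) \<le> (\<integral>\<^sup>+z. g z \<partial>M)"
    by (intro nn_integral_mono) (simp add: indicator_def)
  then have g_fin: "(\<integral>\<^sup>+z. g z * indicator ?B z \<partial>M) \<noteq> \<infinity>"
    using assms(4) by (auto simp: top_unique)
  have "(\<integral>\<^sup>+z. ?f z * indicator ?B z - g z * indicator ?B z \<partial>M)
      = (\<integral>\<^sup>+z. ?f z * indicator ?B z \<partial>M) - (\<integral>\<^sup>+z. g z * indicator ?B z \<partial>M)"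
    using g_fin by (intro nn_integral_diff) (auto simp: indicator_def less_imp_le intro!: AE_I2)
  also have "(\<integral>\<^sup>+z. ?f z * indicator ?B z \<partial>M) = emeasure N ?B"
    using \<open>density M ?f = N\<close> emeasure_density[of ?f M ?B] by simp
  also have "\<dots> - (\<integral>\<^sup>+z. g z * indicator ?B z \<partial>M) = 0"
    using le[of ?B] g_fin by (intro diff_eq_0_ennreal) (auto simp: less_top intro: le_less_trans)
  finally have "AE z in M. ?f z * indicator ?B z - g z * indicator ?B z = 0"
    by (subst (asm) nn_integral_0_iff_AE) auto
  with AE_space show "AE z in M. ?f z \<le> g z"
  proof eventually_elim
    case (elim z)
    then show ?case
      by (cases "g z < ?f z") (auto dest: ennreal_minus_eq_0)
  qed
qed

lemma
  fixes g :: "'a \<Rightarrow> real"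
  assumes "finite_measure M" "finite_measure N" "sets N = sets M" "absolutely_continuous M N"
    and [measurable]: "g \<in> borel_measurable M"
    and g_nonneg: "\<And>z. 0 \<le> g z" and g_le: "\<And>z. g z \<le> C"
    and RN_le: "AE z in M. RN_deriv M N z \<le> ennreal (g z)" and "1 \<le> q"
  shows integrable_RN_deriv_powr: "integrable M (\<lambda>z. enn2real (RN_deriv M N z) powr q)"
    and integral_RN_deriv_powr_le:
      "(\<integral>z. enn2real (RN_deriv M N z) powr q \<partial>M) \<le> (\<integral>z. g z powr (q - 1) \<partial>N)"
proof -
  interpret M: finite_measure M by fact
  let ?f = "\<lambda>z. enn2real (RN_deriv M N z)"
  have f_le: "AE z in M. ?f z \<le> g z"
    using RN_le by eventually_elim (simp add: enn2real_leI g_nonneg)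
  have "0 \<le> q"
    using \<open>1 \<le> q\<close> by simp
  have "0 \<le> C"
    using g_nonneg g_le order_trans by blast
  show "integrable M (\<lambda>z. ?f z powr q)"
    using f_le
    by (intro M.integrable_const_bound[where B = "C powr q"])
       (auto elim!: eventually_mono intro!: powr_mono2 order_trans[OF _ g_le] simp: \<open>0 \<le> q\<close>)
  moreover have "integrable M (\<lambda>z. ?f z * g z powr (q - 1))"
    using f_le
    by (intro M.integrable_const_bound[where B = "C * C powr (q - 1)"])
       (auto elim!: eventually_mono intro!: mult_mono powr_mono2 order_trans[OF _ g_le]
             simp: abs_mult g_nonneg \<open>1 \<le> q\<close> \<open>0 \<le> C\<close>)
  moreover have "AE z in M. ?f z powr q \<le> ?f z * g z powr (q - 1)"
    using f_le
  proof eventually_elim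
    case (elim z)
    have "?f z powr q = ?f z * ?f z powr (q - 1)"
      using powr_add[of "?f z" 1 "q - 1"] by simp
    also have "\<dots> \<le> ?f z * g z powr (q - 1)"
      using elim \<open>1 \<le> q\<close> by (intro mult_left_mono powr_mono2) auto
    finally show ?case .
  qed
  ultimately have "(\<integral>z. ?f z powr q \<partial>M) \<le> (\<integral>z. ?f z * g z powr (q - 1) \<partial>M)"
    by (rule integral_mono_AE)
  also have "\<dots> = (\<integral>z. g z powr (q - 1) \<partial>N)"
    using M.RN_deriv_integral[OF finite_measure.sigma_finite_measure[OF assms(2)] assms(4,3)]
    by simp
  finally show "(\<integral>z. ?f z powr q \<partial>M) \<le> (\<integral>z. g z powr (q - 1) \<partial>N)" .
qed

lemma tsallis_div_le_if_integral_RN_deriv_powr_le: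
  assumes "prob_space M" "prob_space N" "sets N = sets M" "absolutely_continuous M N" "1 < q"
    and "integrable M (\<lambda>z. enn2real (RN_deriv M N z) powr q)"
    and "(\<integral>z. enn2real (RN_deriv M N z) powr q \<partial>M) \<le> c"
  shows "tsallis_div q N M \<le> ereal ((c - 1) / (q - 1))"
proof -
  interpret M: prob_space M by fact
  interpret N: prob_space N by fact
  let ?f = "\<lambda>z. enn2real (RN_deriv M N z)"
  have "integrable M ?f" and "(\<integral>z. ?f z \<partial>M) = 1"
    using M.RN_deriv_integrable[OF N.sigma_finite_measure assms(4,3), of "\<lambda>_. 1"]
      M.RN_deriv_integral[OF N.sigma_finite_measure assms(4,3), of "\<lambda>_. 1"] N.prob_space
    by simp_all
  then have "(\<integral>z. ?f z powr q - ?f z \<partial>M) / (q - 1) \<le> (c - 1) / (q - 1)"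
    using assms(5-7) by (intro divide_right_mono) auto
  with \<open>integrable M ?f\<close> show ?thesis
    using assms(3-6) by (simp add: tsallis_div_def Let_def)
qed

locale coupling_finite_atoms = pair_prob_space M1 M2 + coupling: prob_space \<pi>
  for M1 :: "'a measure" and M2 :: "'b measure" and \<pi> :: "('a \<times> 'b) measure" +
  fixes A :: "'b set"
  assumes sets_coupling: "sets \<pi> = sets (M1 \<Otimes>\<^sub>M M2)"
    and distr_fst: "distr \<pi> M1 fst = M1" and distr_snd: "distr \<pi> M2 snd = M2"
    and finite_atoms: "finite A" and AE_in_atoms: "AE y in M2. y \<in> A"
    and sets_singleton: "{y} \<in> sets M2"
    and measure_atom_pos: "s \<in> A \<Longrightarrow> 0 < measure M2 {s}"
begin

lemma emeasure_le_nn_integral_inverse_atom_mass: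
  assumes E: "E \<in> sets (M1 \<Otimes>\<^sub>M M2)"
  shows "emeasure \<pi> E \<le> (\<integral>\<^sup>+z. ennreal (inverse_atom_mass M2 (snd z)) * indicator E z \<partial>(M1 \<Otimes>\<^sub>M M2))"
proof -
  let ?E_at = "\<lambda>s. (\<lambda>x. (x, s)) -` E"
  let ?U = "\<Union>s\<in>A. fst -` ?E_at s \<inter> space \<pi>" and ?R = "snd -` (space M2 - A) \<inter> space \<pi>"
  have fst: "fst \<in> measurable \<pi> M1" and snd: "snd \<in> measurable \<pi> M2"
    by (simp_all add: measurable_cong_sets[OF sets_coupling refl])
  have A_sets: "A \<in> sets M2"
    by (intro sets.countable[OF sets_singleton] countable_finite finite_atoms)
  have "E \<subseteq> space \<pi>"
    using E sets.sets_into_space sets_coupling by blast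
  then have "E \<subseteq> ?U \<union> ?R"
    using sets_eq_imp_space_eq[OF sets_coupling] by (fastforce simp: space_pair_measure)
  moreover have "?U \<in> sets \<pi>"
    using measurable_sets[OF fst sets_Pair2[OF E]] finite_atoms by blast
  moreover have "?R \<in> sets \<pi>"
    using measurable_sets[OF snd] A_sets by auto
  ultimately have "emeasure \<pi> E \<le> emeasure \<pi> ?U + emeasure \<pi> ?R"
    by (meson emeasure_mono emeasure_subadditive order_trans sets.Un)
  also have "emeasure \<pi> ?R = emeasure M2 (space M2 - A)"
    using emeasure_distr[OF snd, of "space M2 - A"] A_sets distr_snd by simp
  also have "\<dots> = 0"
    using AE_iff_measurable[of "space M2 - A" M2 "\<lambda>y. y \<in> A"] AE_in_atoms A_sets by auto
  also have "emeasure \<pi> ?U \<le> (\<Sum>s\<in>A. emeasure \<pi> (fst -` ?E_at s \<inter> space \<pi>))"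
    using measurable_sets[OF fst sets_Pair2[OF E]] finite_atoms
    by (intro emeasure_subadditive_finite) auto
  also have "\<dots> = (\<Sum>s\<in>A. emeasure M1 (?E_at s))"
    using emeasure_distr[OF fst sets_Pair2[OF E]] distr_fst by simp
  also have "\<dots> = (\<integral>\<^sup>+z. ennreal (inverse_atom_mass M2 (snd z)) * indicator E z \<partial>(M1 \<Otimes>\<^sub>M M2))"
    using nn_integral_inverse_atom_mass_indicator[OF M2.finite_measure_axioms finite_atoms
        AE_in_atoms sets_singleton measure_atom_pos E]
    by simp
  finally show ?thesis
    by simp
qed

lemma borel_measurable_inverse_atom_mass_snd:
  "(\<lambda>z. inverse_atom_mass M2 (snd z)) \<in> borel_measurable (M1 \<Otimes>\<^sub>M M2)"
  using borel_measurable_inverse_atom_mass[OF finite_atoms AE_in_atoms sets_singleton]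
  by measurable

lemma absolutely_continuous_coupling: "absolutely_continuous (M1 \<Otimes>\<^sub>M M2) \<pi>"
  using absolutely_continuous_if_le_density[OF sets_coupling
      emeasure_le_nn_integral_inverse_atom_mass] .

lemma AE_RN_deriv_le_inverse_atom_mass:
  "AE z in M1 \<Otimes>\<^sub>M M2. RN_deriv (M1 \<Otimes>\<^sub>M M2) \<pi> z \<le> ennreal (inverse_atom_mass M2 (snd z))"
proof (rule AE_RN_deriv_le_if_le_density[OF P.sigma_finite_measure_axioms sets_coupling _ _
      emeasure_le_nn_integral_inverse_atom_mass])
  show "(\<lambda>z. ennreal (inverse_atom_mass M2 (snd z))) \<in> borel_measurable (M1 \<Otimes>\<^sub>M M2)"
    using borel_measurable_inverse_atom_mass_snd by measurable
  have "(\<integral>\<^sup>+z. inverse_atom_mass M2 (snd z) \<partial>(M1 \<Otimes>\<^sub>M M2))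
      \<le> (\<integral>\<^sup>+z. (\<Sum>s\<in>A. inverse_atom_mass M2 s) \<partial>(M1 \<Otimes>\<^sub>M M2))"
    using inverse_atom_mass_le_sum[OF finite_atoms AE_in_atoms sets_singleton]
    by (intro nn_integral_mono) (simp add: ennreal_leI)
  then show "(\<integral>\<^sup>+z. inverse_atom_mass M2 (snd z) \<partial>(M1 \<Otimes>\<^sub>M M2)) \<noteq> \<infinity>"
    by (auto simp: top_unique P.emeasure_space_1)
qed

lemma
  fixes q :: real
  assumes "1 \<le> q"
  shows integrable_RN_deriv_powr_coupling:
      "integrable (M1 \<Otimes>\<^sub>M M2) (\<lambda>z. enn2real (RN_deriv (M1 \<Otimes>\<^sub>M M2) \<pi> z) powr q)"
    and integral_RN_deriv_powr_coupling_le: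
      "(\<integral>z. enn2real (RN_deriv (M1 \<Otimes>\<^sub>M M2) \<pi> z) powr q \<partial>(M1 \<Otimes>\<^sub>M M2))
        \<le> (\<Sum>s\<in>A. measure M2 {s} powr (2 - q))"
proof -
  note density_bound = P.finite_measure_axioms coupling.finite_measure_axioms sets_coupling
    absolutely_continuous_coupling borel_measurable_inverse_atom_mass_snd inverse_atom_mass_nonneg
    inverse_atom_mass_le_sum[OF finite_atoms AE_in_atoms sets_singleton]
    AE_RN_deriv_le_inverse_atom_mass \<open>1 \<le> q\<close>
  show "integrable (M1 \<Otimes>\<^sub>M M2) (\<lambda>z. enn2real (RN_deriv (M1 \<Otimes>\<^sub>M M2) \<pi> z) powr q)"
    by (rule integrable_RN_deriv_powr[OF density_bound])
  have snd: "snd \<in> measurable \<pi> M2"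
    by (simp add: measurable_cong_sets[OF sets_coupling refl])
  have [measurable]: "inverse_atom_mass M2 \<in> borel_measurable M2"
    using borel_measurable_inverse_atom_mass[OF finite_atoms AE_in_atoms sets_singleton] .
  have "(\<integral>z. enn2real (RN_deriv (M1 \<Otimes>\<^sub>M M2) \<pi> z) powr q \<partial>(M1 \<Otimes>\<^sub>M M2))
      \<le> (\<integral>z. inverse_atom_mass M2 (snd z) powr (q - 1) \<partial>\<pi>)"
    by (rule integral_RN_deriv_powr_le[OF density_bound])
  also have "\<dots> = (\<integral>y. inverse_atom_mass M2 y powr (q - 1) \<partial>M2)"
    using integral_distr[OF snd, of "\<lambda>y. inverse_atom_mass M2 y powr (q - 1)"] distr_snd by simp
  also have "\<dots> = (\<Sum>s\<in>A. measure M2 {s} powr (2 - q))"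
    using integral_inverse_atom_mass_powr[OF M2.finite_measure_axioms finite_atoms AE_in_atoms
        sets_singleton]
    by simp
  finally show "(\<integral>z. enn2real (RN_deriv (M1 \<Otimes>\<^sub>M M2) \<pi> z) powr q \<partial>(M1 \<Otimes>\<^sub>M M2))
      \<le> (\<Sum>s\<in>A. measure M2 {s} powr (2 - q))" .
qed


end

theorem lemma2p1:
  fixes \<mu>1 :: "'a::polish_space measure" and \<mu>2 :: "'b::polish_space measure"
    and \<pi> :: "('a \<times> 'b) measure" and n :: nat and q :: real
  assumes "prob_space \<mu>1" and "sets \<mu>1 = sets borel"
    and "prob_space \<mu>2" and "sets \<mu>2 = sets borel"
    and "supported_on_at_most n \<mu>2"
    and "coupling \<pi> \<mu>1 \<mu>2"
    and "1 < q" and "q \<le> 2"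
  shows "tsallis_div q \<pi> (\<mu>1 \<Otimes>\<^sub>M \<mu>2) \<le> ereal (phi_q q (real n))"
proof -
  interpret \<mu>2: prob_space \<mu>2 by fact
  have singleton: "{y} \<in> sets \<mu>2" for y
    using assms(4) by simp
  obtain A where A: "finite A" "card A \<le> n" "AE y in \<mu>2. y \<in> A" "\<And>s. s \<in> A \<Longrightarrow> 0 < measure \<mu>2 {s}"
    using \<mu>2.obtain_atoms_if_supported_on_at_most[OF assms(5) singleton] by blast
  have q: "1 \<le> q"
    using assms(7) by simp
  interpret coupling_finite_atoms \<mu>1 \<mu>2 \<pi> A
    using assms(1,3,6) A singleton
    by (intro coupling_finite_atoms.intro pair_prob_space.intro pair_sigma_finite.intro
          coupling_finite_atoms_axioms.intro prob_space_imp_sigma_finite)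
       (auto simp: coupling_def)
  have "(\<integral>z. enn2real (RN_deriv (\<mu>1 \<Otimes>\<^sub>M \<mu>2) \<pi> z) powr q \<partial>(\<mu>1 \<Otimes>\<^sub>M \<mu>2))
      \<le> (\<Sum>s\<in>A. measure \<mu>2 {s} powr (2 - q))"
    by (rule integral_RN_deriv_powr_coupling_le[OF q])
  also have "\<dots> \<le> real (card A) powr (q - 1)"
    using sum_powr_le_card_powr[of A "\<lambda>s. measure \<mu>2 {s}" "2 - q"] A(1) assms(7,8)
      \<mu>2.sum_prob_singleton_eq_1[OF A(1,3) singleton]
    by simp
  also have "\<dots> \<le> real n powr (q - 1)"
    using A(2) assms(7) by (intro powr_mono2) auto
  finally show ?thesis
    using tsallis_div_le_if_integral_RN_deriv_powr_le[OF P.prob_space_axioms coupling.prob_space_axioms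
        sets_coupling absolutely_continuous_coupling assms(7) integrable_RN_deriv_powr_coupling[OF q]]
    by (simp add: phi_q_def)
qed

end
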